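(* Let $A,B,C$ be rings (not necessarily with unit) and $f:A\to B$, $g:B\to C$ ring homomorphisms. If $gf$ is a near isomorphism and $f$ is surjective, then both $f$ and $g$ are near isomorphisms.
   Context: A surjective ring morphism $h:X\to Y$ between (not necessarily unital) rings is a near isomorphism if $X\ker(h)=\ker(h)X=0$. *)

theory Defs
  imports Main
begin

text \<open>Rings not necessarily with unit are modelled by the type class ring
(a semiring with additive inverses; no multiplicative unit is required).\<close>

definition ring_hom_nu :: "('a::ring \<Rightarrow> 'b::ring) \<Rightarrow> bool" where
  "ring_hom_nu h \<longleftrightarrow> (\<forall>x y. h (x + y) = h x + h y \<and> h (x * y) = h x * h y)"

definition ker :: "('a::ring \<Rightarrow> 'b::ring) \<Rightarrow> 'a set" where
  "ker h = {x. h x = 0}"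

definition near_iso :: "('a::ring \<Rightarrow> 'b::ring) \<Rightarrow> bool" where
  "near_iso h \<longleftrightarrow> ring_hom_nu h \<and> surj h \<and>
     (\<forall>x. \<forall>k \<in> ker h. x * k = 0 \<and> k * x = 0)"

end

theory Submission
  imports Defs
begin

text \<open>The kernel of f lies in the kernel of g \<circ> f, which annihilates A, so f is a near
isomorphism. Since f is onto, every element of ker g is f k for some k in ker (g \<circ> f),
and every element of B is f x; then f x * f k = f (x * k) = f 0 = 0, and symmetrically.\<close>

lemma ring_hom_nu_zero:
  assumes "ring_hom_nu h"
  shows "h 0 = 0"
  using assms unfolding ring_hom_nu_def by (metis add_0 add_cancel_right_right)

lemma ring_hom_nu_mult:
  assumes "ring_hom_nu h"
  shows "h (x * y) = h x * h y"
  using assms unfolding ring_hom_nu_def by blast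

lemma surj_comp_imp_surj_left:
  assumes "surj (g \<circ> f)"
  shows "surj g"
  using assms by (auto simp: surj_def)

lemma ker_subset_ker_comp:
  assumes "ring_hom_nu g"
  shows "ker f \<subseteq> ker (g \<circ> f)"
  using ring_hom_nu_zero[OF assms] by (auto simp: ker_def)

lemma ker_comp_annihilates:
  assumes "near_iso (g \<circ> f)" and "k \<in> ker (g \<circ> f)"
  shows "x * k = 0" and "k * x = 0"
  using assms unfolding near_iso_def by blast+

lemma ker_left_factor_subset_image:
  assumes "surj f"
  shows "ker g \<subseteq> f ` ker (g \<circ> f)"
proof
  fix y assume "y \<in> ker g"
  moreover obtain k where "y = f k"
    using \<open>surj f\<close> by (metis surjD)
  ultimately show "y \<in> f ` ker (g \<circ> f)"
    by (auto simp: ker_def)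
qed

lemma near_iso_right_factor:
  assumes "ring_hom_nu f" and "ring_hom_nu g" and "surj f" and "near_iso (g \<circ> f)"
  shows "near_iso f"
  unfolding near_iso_def
  using assms ker_subset_ker_comp[OF \<open>ring_hom_nu g\<close>] ker_comp_annihilates[OF \<open>near_iso (g \<circ> f)\<close>]
  by blast

lemma near_iso_left_factor:
  assumes "ring_hom_nu f" and "ring_hom_nu g" and "surj f" and "near_iso (g \<circ> f)"
  shows "near_iso g"
proof -
  have "surj g"
    using \<open>near_iso (g \<circ> f)\<close> surj_comp_imp_surj_left unfolding near_iso_def by blast
  moreover have "y * k' = 0 \<and> k' * y = 0" if "k' \<in> ker g" for y k'
  proof -
    obtain k where k: "k \<in> ker (g \<circ> f)" and k': "k' = f k"
      using \<open>k' \<in> ker g\<close> ker_left_factor_subset_image[OF \<open>surj f\<close>] by blast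
    obtain x where x: "y = f x"
      using \<open>surj f\<close> by (metis surjD)
    show ?thesis
      using ker_comp_annihilates[OF \<open>near_iso (g \<circ> f)\<close> k]
        ring_hom_nu_mult[OF \<open>ring_hom_nu f\<close>] ring_hom_nu_zero[OF \<open>ring_hom_nu f\<close>]
      unfolding x k' by metis
  qed
  ultimately show ?thesis
    using \<open>ring_hom_nu g\<close> unfolding near_iso_def by blast
qed

theorem lemma4p4:
  fixes f :: "'a::ring \<Rightarrow> 'b::ring" and g :: "'b \<Rightarrow> 'c::ring"
  assumes "ring_hom_nu f" and "ring_hom_nu g"
    and "near_iso (g \<circ> f)" and "surj f"
  shows "near_iso f \<and> near_iso g"
  using near_iso_right_factor near_iso_left_factor assms by blast

end
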